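(* Let $n\le N$ be positive integers and $r>0$. Let $\mathcal G_1,\mathcal G_2$ be nonempty families of subsets of $[N]$, each member having at most $n$ elements, and suppose both $\mathcal G_1$ and $\mathcal G_2$ are $r$-spread. If $r\ge 2^{12}\log_2(2n)$, then there exist $G_1\in\mathcal G_1$ and $G_2\in\mathcal G_2$ with $G_1\cap G_2=\emptyset$.
   Context: A family $\mathcal G$ of subsets of $[N]$ is $r$-spread if for every $S\subseteq[N]$, $|\{G\in\mathcal G: S\subseteq G\}|\le r^{-|S|}|\mathcal G|$. *)

theory Defs
  imports Complex_Main
begin

definition r_spread :: "nat \<Rightarrow> real \<Rightarrow> nat set set \<Rightarrow> bool" where
  "r_spread N r \<G> \<longleftrightarrow>
     (\<forall>S. S \<subseteq> {1..N} \<longrightarrow>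
        real (card {G \<in> \<G>. S \<subseteq> G}) \<le> r powi (- int (card S)) * real (card \<G>))"

end

theory Submission
  imports Defs "HOL-Library.Discrete_Functions"
begin

(*
  A uniformly random set of L * w points of [N] contains a member of an r-spread family of
  sets of size < 2^L with probability at least 1 - 16 N / (w r).  The random set is built in
  L rounds of w points.  In a round with random w-set W, where the remaining members have size
  < 2 t, each member A_i is replaced by its minimal fragment T: the smallest A_j - W over members
  A_j of size < 2 t with A_j \<subseteq> W \<union> A_i.  Large fragments (|T| \<ge> t) are rare:
  (W \<union> T, T, i) determines (W, i), and by minimality T is a subset of one fixed small member
  inside W \<union> T, so spreadness bounds their number by a geometric series in 4 N / (w r).  The
  small fragments form again a spread family, now of sets of size < t, on the remaining points,
  and the next round starts.

  For two such families with 16 N / (w r) < 1/2, fewer than half of all (L w)-sets miss a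
  member of either, so counting pairs of disjoint (L w)-sets yields Y \<supseteq> G1 and Y' \<supseteq> G2
  with Y \<inter> Y' = {}.  The parameters L ~ log2 n and w ~ 32 N / r fit into [N] as soon as
  r \<ge> 2^12 log2 (2 n).
*)

abbreviation nsubsets :: "'a set \<Rightarrow> nat \<Rightarrow> 'a set set" where
  "nsubsets X m \<equiv> {Y. Y \<subseteq> X \<and> card Y = m}"

abbreviation member_free_nsubsets :: "'a set \<Rightarrow> nat \<Rightarrow> 'i set \<Rightarrow> ('i \<Rightarrow> 'a set) \<Rightarrow> 'a set set" where
  "member_free_nsubsets X m I A \<equiv> {Y\<in>nsubsets X m. \<forall>i\<in>I. \<not> A i \<subseteq> Y}"

lemma binomial_add_le:
  assumes "w \<ge> 1"
  shows "real (M choose (w + j)) \<le> real (M choose w) * (real M / real w) ^ j"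
proof (induction j)
  case 0
  then show ?case by simp
next
  case (Suc j)
  have "(M choose Suc i) * Suc i = (M choose i) * (M - i)" for i
  proof (cases M)
    case (Suc M')
    then show ?thesis
      using Suc_times_binomial[of i M'] binomial_absorb_comp[of M i] by (simp add: mult.commute)
  qed simp
  then have "real (M choose Suc (w + j)) * real (Suc (w + j)) = real (M choose (w + j)) * real (M - (w + j))"
    by (metis of_nat_mult)
  also have "\<dots> \<le> real (M choose (w + j)) * real M"
    by (intro mult_left_mono) auto
  finally have "real (M choose Suc (w + j)) \<le> real (M choose (w + j)) * real M / real (Suc (w + j))"
    by (simp add: field_simps)
  also have "\<dots> \<le> real (M choose (w + j)) * real M / real w"
    using assms by (intro divide_left_mono) auto
  also have "\<dots> \<le> real (M choose w) * (real M / real w) ^ j * real M / real w"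
    by (intro divide_right_mono mult_right_mono Suc.IH) auto
  finally show ?case
    by (simp add: mult_ac)
qed

lemma choose_mult_add: "(n choose (k + m)) * ((k + m) choose k) = (n choose k) * ((n - k) choose m)"
proof (cases "k + m \<le> n")
  case False
  then have "n choose k = 0 \<or> (n - k) choose m = 0"
    by (cases "k \<le> n") simp_all
  with False show ?thesis
    by (auto simp: binomial_eq_0)
qed (simp add: choose_mult)

lemma sum_power_le_twice:
  fixes q :: real
  assumes "0 \<le> q" "q \<le> 1 / 2"
  shows "(\<Sum>j=t..k. q ^ j) \<le> 2 * q ^ t"
proof -
  have "(\<Sum>j=t..k. q ^ j) \<le> q ^ t / (1 - q)"
    using assms by (auto simp: sum_gp divide_right_mono)
  also have "\<dots> \<le> 2 * q ^ t"
    using assms mult_right_mono[of "2 * q" 1 "q ^ t"] by (simp add: field_simps)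
  finally show ?thesis .
qed

lemma power_two_power_le:
  fixes q :: real
  assumes "0 \<le> q" "q \<le> 1 / 2"
  shows "2 * q ^ (2 ^ L) \<le> 4 * q / 2 ^ Suc L"
proof -
  have "q ^ (2 ^ L) \<le> q ^ Suc L"
    using assms by (intro power_decreasing) (auto simp: Suc_leI)
  also have "\<dots> \<le> q * (1 / 2) ^ L"
    using assms by (simp add: mult_left_mono power_mono)
  finally show ?thesis
    by (simp add: power_one_over)
qed

lemma sum_card_disjoint_extensions:
  assumes X: "finite X"
  shows "(\<Sum>W\<in>nsubsets X w. card {Y\<in>nsubsets (X - W) m. P (W \<union> Y)})
           = ((w + m) choose w) * card {Z\<in>nsubsets X (w + m). P Z}"
proof -
  let ?S = "SIGMA W:nsubsets X w. {Y\<in>nsubsets (X - W) m. P (W \<union> Y)}"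
  let ?T = "SIGMA Z:{Z\<in>nsubsets X (w + m). P Z}. nsubsets Z w"
  have fin: "finite Y" if "Y \<subseteq> X" for Y
    using X that by (rule finite_subset[rotated])
  have card_Un: "card (W \<union> Y) = card W + card Y" if "W \<subseteq> X" "Y \<subseteq> X - W" for W Y
    using that by (intro card_Un_disjoint) (auto intro: fin)
  have "bij_betw (\<lambda>(W, Y). (W \<union> Y, W)) ?S ?T"
  proof (rule bij_betw_byWitness[where f' = "\<lambda>(Z, W). (W, Z - W)"])
    show "(\<lambda>(W, Y). (W \<union> Y, W)) ` ?S \<subseteq> ?T"
      by (auto simp: card_Un)
    show "(\<lambda>(Z, W). (W, Z - W)) ` ?T \<subseteq> ?S"
      by (auto simp: card_Diff_subset fin Un_absorb1)
  qed auto
  then have "card ?S = card ?T"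
    by (rule bij_betw_same_card)
  also have "card ?T = (\<Sum>Z\<in>{Z\<in>nsubsets X (w + m). P Z}. card (nsubsets Z w))"
    using X fin by (intro card_SigmaI) auto
  also have "\<dots> = ((w + m) choose w) * card {Z\<in>nsubsets X (w + m). P Z}"
    using fin by (simp add: n_subsets)
  finally show ?thesis
    using X by (simp add: card_SigmaI)
qed

lemma card_Sigma_nsubsets_complement:
  assumes "finite X" "\<B> \<subseteq> nsubsets X m"
  shows "card (SIGMA Y:\<B>. nsubsets (X - Y) m') = card \<B> * ((card X - m) choose m')"
proof -
  have "card (SIGMA Y:\<B>. nsubsets (X - Y) m') = (\<Sum>Y\<in>\<B>. card (nsubsets (X - Y) m'))"
    using assms by (intro card_SigmaI) (auto intro: finite_subset)
  also have "\<dots> = (\<Sum>Y\<in>\<B>. (card X - m) choose m')"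
    using assms by (intro sum.cong) (auto simp: n_subsets card_Diff_subset finite_subset)
  finally show ?thesis
    by simp
qed

lemma Sigma_nsubsets_complement_cover:
  assumes "\<And>Y Y'. Y \<in> nsubsets X m - \<B>1 \<Longrightarrow> Y' \<in> nsubsets (X - Y) m \<Longrightarrow> Y' \<in> \<B>2"
  shows "(SIGMA Y:nsubsets X m. nsubsets (X - Y) m)
           \<subseteq> (SIGMA Y:\<B>1. nsubsets (X - Y) m) \<union> prod.swap ` (SIGMA Y:\<B>2. nsubsets (X - Y) m)"
proof
  fix p assume "p \<in> (SIGMA Y:nsubsets X m. nsubsets (X - Y) m)"
  then obtain Y Y' where p: "p = (Y, Y')"
    and Y: "Y \<subseteq> X" "card Y = m" and Y': "Y' \<subseteq> X - Y" "card Y' = m"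
    by blast
  show "p \<in> (SIGMA Y:\<B>1. nsubsets (X - Y) m) \<union> prod.swap ` (SIGMA Y:\<B>2. nsubsets (X - Y) m)"
  proof (cases "Y \<in> \<B>1")
    case True
    then have "(Y, Y') \<in> (SIGMA Y:\<B>1. nsubsets (X - Y) m)"
      using Y' by blast
    with p show ?thesis
      by simp
  next
    case False
    then have "Y' \<in> \<B>2"
      using assms Y Y' by blast
    moreover have "Y \<subseteq> X - Y'"
      using Y Y' by blast
    ultimately have "(Y', Y) \<in> (SIGMA Y:\<B>2. nsubsets (X - Y) m)"
      using Y(2) by blast
    then have "prod.swap (Y', Y) \<in> prod.swap ` (SIGMA Y:\<B>2. nsubsets (X - Y) m)"
      by (rule imageI)
    with p show ?thesis
      by simp
  qed
qed

lemma exists_disjoint_nsubsets_avoiding: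
  assumes X: "finite X" and m: "2 * m \<le> card X"
    and B1: "\<B>1 \<subseteq> nsubsets X m" and B2: "\<B>2 \<subseteq> nsubsets X m"
    and less: "card \<B>1 + card \<B>2 < card X choose m"
  shows "\<exists>Y Y'. Y \<in> nsubsets X m - \<B>1 \<and> Y' \<in> nsubsets (X - Y) m - \<B>2"
proof (rule ccontr)
  assume "\<not> ?thesis"
  then have cover: "(SIGMA Y:nsubsets X m. nsubsets (X - Y) m)
      \<subseteq> (SIGMA Y:\<B>1. nsubsets (X - Y) m) \<union> prod.swap ` (SIGMA Y:\<B>2. nsubsets (X - Y) m)"
    by (intro Sigma_nsubsets_complement_cover) blast
  let ?pairs = "\<lambda>\<B>. SIGMA Y:\<B>. nsubsets (X - Y) m"
  have fin: "finite (?pairs \<B>)" if "\<B> \<subseteq> nsubsets X m" for \<B>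
    using X that by (intro finite_SigmaI) (auto intro: finite_subset)
  have "(card X choose m) * ((card X - m) choose m) = card (?pairs (nsubsets X m))"
    using card_Sigma_nsubsets_complement[OF X order_refl, of m m] X by (simp add: n_subsets)
  also have "\<dots> \<le> card (?pairs \<B>1 \<union> prod.swap ` ?pairs \<B>2)"
    using cover fin B1 B2 by (intro card_mono) auto
  also have "\<dots> \<le> card (?pairs \<B>1) + card (prod.swap ` ?pairs \<B>2)"
    by (rule card_Un_le)
  also have "\<dots> \<le> card (?pairs \<B>1) + card (?pairs \<B>2)"
    by (intro add_left_mono card_image_le fin B2)
  also have "\<dots> = (card \<B>1 + card \<B>2) * ((card X - m) choose m)"
    using X B1 B2 by (simp add: card_Sigma_nsubsets_complement add_mult_distrib)
  finally have "(card X choose m) * ((card X - m) choose m) \<le> (card \<B>1 + card \<B>2) * ((card X - m) choose m)" .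
  moreover have "0 < (card X - m) choose m"
    using m by (intro zero_less_binomial) linarith
  ultimately have "card X choose m \<le> card \<B>1 + card \<B>2"
    by (rule mult_right_le_imp_le)
  with less show False
    by linarith
qed

text \<open>Families are indexed, so that repeated members count with multiplicity: distinct
  members may have the same fragment.\<close>

definition spread :: "real \<Rightarrow> 'i set \<Rightarrow> ('i \<Rightarrow> 'a set) \<Rightarrow> bool" where
  "spread \<kappa> I A \<longleftrightarrow> (\<forall>T. real (card {i\<in>I. T \<subseteq> A i}) * \<kappa> ^ card T \<le> real (card I))"

lemma spread_mono:
  assumes "spread \<kappa> I A" "finite I" "\<kappa> \<ge> 0" "\<And>i. i \<in> I \<Longrightarrow> B i \<subseteq> A i"
  shows "spread \<kappa> I B"
  unfolding spread_def
proof
  fix T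
  have "card {i\<in>I. T \<subseteq> B i} \<le> card {i\<in>I. T \<subseteq> A i}"
    using assms(2,4) by (intro card_mono) auto
  then have "real (card {i\<in>I. T \<subseteq> B i}) * \<kappa> ^ card T \<le> real (card {i\<in>I. T \<subseteq> A i}) * \<kappa> ^ card T"
    using assms(3) by (intro mult_right_mono) auto
  also have "\<dots> \<le> real (card I)"
    using assms(1) unfolding spread_def by blast
  finally show "real (card {i\<in>I. T \<subseteq> B i}) * \<kappa> ^ card T \<le> real (card I)" .
qed

lemma spread_power_card_le:
  assumes "spread \<kappa> I A" "finite I" "\<kappa> \<ge> 0" "i \<in> I"
  shows "\<kappa> ^ card (A i) \<le> real (card I)"
proof -
  have "1 \<le> card {j\<in>I. A i \<subseteq> A j}"
    using assms(2,4) card_mono[of "{j\<in>I. A i \<subseteq> A j}" "{i}"] by simp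
  then have "\<kappa> ^ card (A i) \<le> real (card {j\<in>I. A i \<subseteq> A j}) * \<kappa> ^ card (A i)"
    using assms(3) by (simp add: mult_le_cancel_right1)
  also have "\<dots> \<le> real (card I)"
    using assms(1) unfolding spread_def by blast
  finally show ?thesis .
qed

lemma spread_if_r_spread:
  assumes "r_spread N r \<G>" "\<forall>G\<in>\<G>. G \<subseteq> {1..N}" "r > 0"
  shows "spread r \<G> id"
  unfolding spread_def
proof
  fix T :: "nat set"
  show "real (card {G\<in>\<G>. T \<subseteq> id G}) * r ^ card T \<le> real (card \<G>)"
  proof (cases "T \<subseteq> {1..N}")
    case True
    then have "real (card {G\<in>\<G>. T \<subseteq> G}) \<le> real (card \<G>) / r ^ card T"
      using assms(1) by (simp add: r_spread_def power_int_minus field_simps)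
    then show ?thesis
      using assms(3) by (simp add: field_simps)
  next
    case False
    then have no_superset: "{G\<in>\<G>. T \<subseteq> G} = {}"
      using assms(2) by auto
    show ?thesis
      by (simp add: no_superset)
  qed
qed

lemma three_card_member_le_of_spread:
  fixes \<G> :: "'a set set" and \<kappa> :: real
  assumes X: "finite X" and \<G>: "\<forall>G\<in>\<G>. G \<subseteq> X" and sp: "spread \<kappa> \<G> id" and \<kappa>: "8 \<le> \<kappa>"
    and G: "G \<in> \<G>"
  shows "3 * card G \<le> card X"
proof -
  have "\<G> \<subseteq> Pow X"
    using \<G> by blast
  then have fin: "finite \<G>" and "card \<G> \<le> 2 ^ card X"
    using X card_mono[of "Pow X" \<G>] by (auto simp: card_Pow finite_subset)
  have "(2::real) ^ (3 * card G) = 8 ^ card G"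
    by (simp add: power_mult)
  also have "\<dots> \<le> \<kappa> ^ card G"
    using \<kappa> by (intro power_mono) auto
  also have "\<dots> \<le> real (card \<G>)"
    using spread_power_card_le[OF sp fin _ G] \<kappa> by simp
  also have "\<dots> \<le> real (2 ^ card X)"
    using \<open>card \<G> \<le> 2 ^ card X\<close> by (simp only: of_nat_le_iff)
  finally show ?thesis
    by simp
qed

text \<open>It is
  only meaningful for \<open>i \<in> I\<close> with \<open>card (A i) \<le> k\<close>; otherwise \<open>ARG_MIN\<close> ranges over an
  empty predicate and the value is unspecified.\<close>

definition fragment_source :: "'i set \<Rightarrow> ('i \<Rightarrow> 'a set) \<Rightarrow> nat \<Rightarrow> 'a set \<Rightarrow> 'i \<Rightarrow> 'i" where
  "fragment_source I A k W i =
     (ARG_MIN (\<lambda>j. card (A j - W)) j. j \<in> I \<and> card (A j) \<le> k \<and> A j \<subseteq> W \<union> A i)"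

definition fragment :: "'i set \<Rightarrow> ('i \<Rightarrow> 'a set) \<Rightarrow> nat \<Rightarrow> 'a set \<Rightarrow> 'i \<Rightarrow> 'a set" where
  "fragment I A k W i = A (fragment_source I A k W i) - W"

lemma fragment_source:
  fixes W :: "'a set"
  assumes "i \<in> I" "card (A i) \<le> k"
  defines "j \<equiv> fragment_source I A k W i"
  shows "j \<in> I" "card (A j) \<le> k" "A j \<subseteq> W \<union> A i"
    and "\<And>j'. j' \<in> I \<Longrightarrow> card (A j') \<le> k \<Longrightarrow> A j' \<subseteq> W \<union> A i \<Longrightarrow> card (A j - W) \<le> card (A j' - W)"
  using arg_min_nat_lemma[of "\<lambda>j. j \<in> I \<and> card (A j) \<le> k \<and> A j \<subseteq> W \<union> A i" i "\<lambda>j. card (A j - W)"]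
    assms unfolding j_def fragment_source_def by auto

lemma fragment_disjoint: "fragment I A k W i \<inter> W = {}"
  by (auto simp: fragment_def)

lemma fragment_subset:
  assumes "i \<in> I" "card (A i) \<le> k"
  shows "fragment I A k W i \<subseteq> A i"
  using fragment_source(3)[where A=A and i=i and W=W, OF assms] by (auto simp: fragment_def)

lemma fragment_covers_member:
  assumes "i \<in> I" "card (A i) \<le> k"
  shows "\<exists>j\<in>I. card (A j) \<le> k \<and> A j \<subseteq> W \<union> fragment I A k W i"
  using fragment_source(1,2)[where A=A and i=i and W=W, OF assms] by (auto simp: fragment_def)

lemma fragment_unique:
  assumes "i \<in> I" "card (A i) \<le> k" "finite (A i)"
    and "j \<in> I" "card (A j) \<le> k" "A j \<subseteq> W \<union> fragment I A k W i"
  shows "A j - W = fragment I A k W i"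
proof (rule card_seteq)
  show "finite (fragment I A k W i)"
    using fragment_subset[where A=A and i=i and W=W, OF assms(1,2)] assms(3) by (rule finite_subset)
  show "A j - W \<subseteq> fragment I A k W i"
    using assms(6) by blast
  have "A j \<subseteq> W \<union> A i"
    using assms(6) fragment_subset[where A=A and i=i and W=W, OF assms(1,2)] by blast
  then show "card (fragment I A k W i) \<le> card (A j - W)"
    using fragment_source(4)[where A=A and i=i and W=W, OF assms(1,2,4,5)] by (simp add: fragment_def)
qed

definition canonical_member :: "'i set \<Rightarrow> ('i \<Rightarrow> 'a set) \<Rightarrow> nat \<Rightarrow> 'a set \<Rightarrow> 'a set" where
  "canonical_member I A k Z =
     (if \<exists>j\<in>I. card (A j) \<le> k \<and> A j \<subseteq> Z then A (SOME j. j \<in> I \<and> card (A j) \<le> k \<and> A j \<subseteq> Z) else {})"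

lemma canonical_member_small:
  assumes "\<And>i. i \<in> I \<Longrightarrow> finite (A i)"
  shows "finite (canonical_member I A k Z) \<and> card (canonical_member I A k Z) \<le> k"
proof (cases "\<exists>j\<in>I. card (A j) \<le> k \<and> A j \<subseteq> Z")
  case True
  then have "\<exists>j. j \<in> I \<and> card (A j) \<le> k \<and> A j \<subseteq> Z"
    by blast
  then have "(\<lambda>j. j \<in> I \<and> card (A j) \<le> k \<and> A j \<subseteq> Z) (SOME j. j \<in> I \<and> card (A j) \<le> k \<and> A j \<subseteq> Z)"
    by (rule someI_ex)
  with True assms show ?thesis
    by (simp add: canonical_member_def)
qed (auto simp: canonical_member_def)

text \<open>By minimality, a fragment \<open>T\<close> lies inside every small member contained in \<open>W \<union> T\<close>.
  Hence \<open>T\<close> is one of at most \<open>2 ^ k\<close> subsets of a set determined by \<open>W \<union> T\<close> alone, which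
  makes the code \<open>(W \<union> T, T, i)\<close> of a large fragment cheap.\<close>

lemma fragment_subset_canonical_member:
  assumes "i \<in> I" "card (A i) \<le> k" "finite (A i)"
  shows "fragment I A k W i \<subseteq> canonical_member I A k (W \<union> fragment I A k W i)"
proof -
  let ?Z = "W \<union> fragment I A k W i"
  let ?j = "SOME j. j \<in> I \<and> card (A j) \<le> k \<and> A j \<subseteq> ?Z"
  have ex: "\<exists>j\<in>I. card (A j) \<le> k \<and> A j \<subseteq> ?Z"
    using fragment_covers_member[where A=A and i=i and W=W, OF assms(1,2)] .
  then have "\<exists>j. j \<in> I \<and> card (A j) \<le> k \<and> A j \<subseteq> ?Z"
    by blast
  then have "?j \<in> I \<and> card (A ?j) \<le> k \<and> A ?j \<subseteq> ?Z"
    by (rule someI_ex)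
  then have "A ?j - W = fragment I A k W i"
    by (intro fragment_unique[where A=A and i=i and W=W, OF assms]) auto
  with ex show ?thesis
    by (auto simp: canonical_member_def)
qed

lemma card_nsubsets_le_four_power:
  assumes "finite C" "card C \<le> 2 * j"
  shows "real (card (nsubsets C j)) \<le> 4 ^ j"
proof -
  have "card (nsubsets C j) = card C choose j"
    using assms(1) by (rule n_subsets)
  also have "\<dots> \<le> 2 ^ card C"
    by (rule binomial_le_pow2)
  also have "\<dots> \<le> 2 ^ (2 * j)"
    using assms(2) by (intro power_increasing) auto
  also have "\<dots> = 4 ^ j"
    by (simp add: power_mult)
  finally show ?thesis
    by (metis of_nat_le_iff of_nat_numeral of_nat_power)
qed

lemma card_fragment_codes_le:
  fixes A :: "'i \<Rightarrow> 'a set" and C :: "'a set \<Rightarrow> 'a set" and \<kappa> :: real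
  assumes X: "finite X" and I: "finite I" and sp: "spread \<kappa> I A" and \<kappa>: "\<kappa> > 0"
    and XN: "card X \<le> N" and w: "w \<ge> 1" and kj: "k \<le> 2 * j"
    and C: "\<And>Z. finite (C Z) \<and> card (C Z) \<le> k"
  shows "real (card (SIGMA Z:nsubsets X (w + j). SIGMA T:nsubsets (C Z) j. {i\<in>I. T \<subseteq> A i}))
           \<le> (4 * real N / (real w * \<kappa>)) ^ j * real (card X choose w) * real (card I)"
proof -
  have few_supersets: "real (card {i\<in>I. T \<subseteq> A i}) \<le> real (card I) / \<kappa> ^ j" if "card T = j" for T
  proof -
    have "real (card {i\<in>I. T \<subseteq> A i}) * \<kappa> ^ j \<le> real (card I)"
      using sp that unfolding spread_def by blast
    then show ?thesis
      using \<kappa> by (simp add: field_simps)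
  qed
  have few_subsets: "real (card (nsubsets (C Z) j)) \<le> 4 ^ j" for Z
    using C[of Z] kj by (intro card_nsubsets_le_four_power) auto
  have "real (card (SIGMA Z:nsubsets X (w + j). SIGMA T:nsubsets (C Z) j. {i\<in>I. T \<subseteq> A i}))
      = (\<Sum>Z\<in>nsubsets X (w + j). \<Sum>T\<in>nsubsets (C Z) j. real (card {i\<in>I. T \<subseteq> A i}))"
    using X I C by (simp add: card_SigmaI finite_SigmaI)
  also have "\<dots> \<le> (\<Sum>Z\<in>nsubsets X (w + j). \<Sum>T\<in>nsubsets (C Z) j. real (card I) / \<kappa> ^ j)"
    by (intro sum_mono few_supersets) simp
  also have "\<dots> \<le> (\<Sum>Z\<in>nsubsets X (w + j). 4 ^ j * (real (card I) / \<kappa> ^ j))"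
    using \<kappa> few_subsets by (intro sum_mono) (simp add: divide_right_mono mult_right_mono)
  also have "\<dots> = real (card X choose (w + j)) * 4 ^ j * real (card I) / \<kappa> ^ j"
    using X by (simp add: n_subsets)
  also have "\<dots> \<le> real (card X choose w) * (real N / real w) ^ j * 4 ^ j * real (card I) / \<kappa> ^ j"
  proof -
    have "real (card X choose (w + j)) \<le> real (card X choose w) * (real (card X) / real w) ^ j"
      using w by (rule binomial_add_le)
    also have "\<dots> \<le> real (card X choose w) * (real N / real w) ^ j"
      using XN by (intro mult_left_mono power_mono divide_right_mono) auto
    finally show ?thesis
      using \<kappa> by (intro divide_right_mono mult_right_mono) auto
  qed
  also have "\<dots> = (4 * real N / (real w * \<kappa>)) ^ j * real (card X choose w) * real (card I)"
    by (simp add: power_divide power_mult_distrib)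
  finally show ?thesis .
qed

lemma fragment_code_mem:
  assumes X: "finite X" and AX: "\<forall>i\<in>I. A i \<subseteq> X" and W: "W \<subseteq> X" "card W = w"
    and i: "i \<in> I" "card (A i) \<le> k"
  defines "T \<equiv> fragment I A k W i"
  shows "card T \<le> k"
    and "(W \<union> T, T, i) \<in> (SIGMA Z:nsubsets X (w + card T). SIGMA T':nsubsets (canonical_member I A k Z) (card T).
           {i\<in>I. T' \<subseteq> A i})"
proof -
  have T_A: "T \<subseteq> A i"
    unfolding T_def using fragment_subset[where A=A and i=i and W=W, OF i] .
  have "finite (A i)"
    using AX i(1) X by (meson finite_subset)
  then have fin: "finite (A i)" "finite W" "finite T"
    using W X T_A by (auto intro: finite_subset)
  then show "card T \<le> k"
    using card_mono[OF _ T_A] i(2) by linarith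
  have "card (W \<union> T) = w + card T"
    using fin W fragment_disjoint[of I A k W i] by (subst card_Un_disjoint) (auto simp: T_def)
  moreover have "W \<union> T \<subseteq> X"
    using W(1) T_A AX i(1) by blast
  moreover have "T \<subseteq> canonical_member I A k (W \<union> T)"
    unfolding T_def using fragment_subset_canonical_member[where A=A and i=i and W=W, OF i fin(1)] .
  ultimately show "(W \<union> T, T, i) \<in> (SIGMA Z:nsubsets X (w + card T). SIGMA T':nsubsets (canonical_member I A k Z) (card T).
      {i\<in>I. T' \<subseteq> A i})"
    using i(1) T_A by simp
qed

lemma card_large_fragments_le:
  fixes A :: "'i \<Rightarrow> 'a set" and \<kappa> q :: real
  assumes X: "finite X" and I: "finite I" and AX: "\<forall>i\<in>I. A i \<subseteq> X" and sp: "spread \<kappa> I A"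
    and \<kappa>: "\<kappa> > 0" and XN: "card X \<le> N" and w: "w \<ge> 1" and kt: "k < 2 * t"
    and q: "q = 4 * real N / (real w * \<kappa>)" and q_le: "q \<le> 1 / 2"
  shows "(\<Sum>W\<in>nsubsets X w. real (card {i\<in>I. card (A i) \<le> k \<and> t \<le> card (fragment I A k W i)}))
           \<le> 2 * q ^ t * real (card X choose w) * real (card I)"
proof -
  let ?P = "SIGMA W:nsubsets X w. {i\<in>I. card (A i) \<le> k \<and> t \<le> card (fragment I A k W i)}"
  let ?C = "canonical_member I A k"
  let ?codes = "\<lambda>j. SIGMA Z:nsubsets X (w + j). SIGMA T:nsubsets (?C Z) j. {i\<in>I. T \<subseteq> A i}"
  let ?code = "\<lambda>(W, i). (W \<union> fragment I A k W i, fragment I A k W i, i)"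
  have finA: "finite (A i)" if "i \<in> I" for i
    using AX X that by (blast intro: finite_subset)
  have C: "finite (?C Z) \<and> card (?C Z) \<le> k" for Z
    using finA by (rule canonical_member_small)
  have inj: "inj_on ?code ?P"
    by (rule inj_on_inverseI[where g = "\<lambda>(Z, T, i). (Z - T, i)"]) (auto simp: fragment_def)
  have code_mem: "?code p \<in> (\<Union>j\<in>{t..k}. ?codes j)" if "p \<in> ?P" for p
  proof -
    obtain W i where p: "p = (W, i)"
      by fastforce
    with that have W: "W \<subseteq> X" "card W = w" and i: "i \<in> I" "card (A i) \<le> k"
      and large: "t \<le> card (fragment I A k W i)"
      by auto
    show ?thesis
      unfolding p prod.case using fragment_code_mem[OF X AX W i] large by auto
  qed
  have "card ?P \<le> card (\<Union>j\<in>{t..k}. ?codes j)"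
    using X I C code_mem by (intro card_inj_on_le[OF inj]) (auto intro!: finite_SigmaI)
  also have "\<dots> \<le> (\<Sum>j=t..k. card (?codes j))"
    by (rule card_UN_le) simp
  finally have "real (card ?P) \<le> real (\<Sum>j=t..k. card (?codes j))"
    by (rule of_nat_mono)
  also have "\<dots> = (\<Sum>j=t..k. real (card (?codes j)))"
    by (rule of_nat_sum)
  also have "\<dots> \<le> (\<Sum>j=t..k. q ^ j * real (card X choose w) * real (card I))"
    using kt card_fragment_codes_le[OF X I sp \<kappa> XN w _ C] by (intro sum_mono) (auto simp: q)
  also have "\<dots> = (\<Sum>j=t..k. q ^ j) * real (card X choose w) * real (card I)"
    by (simp add: sum_distrib_right)
  also have "\<dots> \<le> 2 * q ^ t * real (card X choose w) * real (card I)"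
    using q_le \<kappa> by (intro mult_right_mono sum_power_le_twice) (auto simp: q)
  finally show ?thesis
    using X I by (simp add: card_SigmaI)
qed

lemma card_large_fragments_le_dyadic:
  fixes A :: "'i \<Rightarrow> 'a set" and \<kappa> q :: real
  assumes "finite X" "finite I" "\<forall>i\<in>I. A i \<subseteq> X" "spread \<kappa> I A" "\<kappa> > 0" "card X \<le> N" "w \<ge> 1"
    and q: "q = 4 * real N / (real w * \<kappa>)" and q_le: "q \<le> 1 / 2"
    and k: "k = 2 * 2 ^ L - 1"
  shows "(\<Sum>W\<in>nsubsets X w. real (card {i\<in>I. card (A i) \<le> k \<and> 2 ^ L \<le> card (fragment I A k W i)}))
           \<le> 4 * q / 2 ^ Suc L * real (card X choose w) * real (card I)"
proof -
  have "(\<Sum>W\<in>nsubsets X w. real (card {i\<in>I. card (A i) \<le> k \<and> 2 ^ L \<le> card (fragment I A k W i)}))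
      \<le> 2 * q ^ (2 ^ L) * real (card X choose w) * real (card I)"
    using k by (intro card_large_fragments_le[OF assms(1-7) _ q q_le]) simp
  also have "\<dots> \<le> 4 * q / 2 ^ Suc L * real (card X choose w) * real (card I)"
    using q q_le assms(5) power_two_power_le[of q L] by (intro mult_right_mono) auto
  finally show ?thesis .
qed

definition residual :: "'i set \<Rightarrow> ('i \<Rightarrow> 'a set) \<Rightarrow> nat \<Rightarrow> 'a set \<Rightarrow> 'i \<Rightarrow> 'a set" where
  "residual I A k W i = (if card (A i) \<le> k then fragment I A k W i else A i - W)"

lemma residual_subset: "i \<in> I \<Longrightarrow> residual I A k W i \<subseteq> A i - W"
  using fragment_subset[where A=A and i=i and W=W] fragment_disjoint[of I A k W i]
  by (auto simp: residual_def)

lemma spread_residual: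
  assumes "spread \<kappa> I A" "finite I" "\<kappa> \<ge> 0"
  shows "spread \<kappa> I (residual I A k W)"
  using assms residual_subset[of _ I A k W] by (intro spread_mono[OF assms]) auto

lemma residual_covers_member: "i \<in> I \<Longrightarrow> \<exists>j\<in>I. A j \<subseteq> W \<union> residual I A k W i"
  using fragment_covers_member[where A=A and i=i and W=W and I=I and k=k]
  by (cases "card (A i) \<le> k") (auto simp: residual_def)

lemma card_member_free_extensions_le:
  fixes A :: "'i \<Rightarrow> 'a set"
  assumes X: "finite X" and I: "finite I"
  shows "real (card {Y\<in>nsubsets (X - W) m. \<forall>i\<in>I. \<not> A i \<subseteq> W \<union> Y}) * real (card {i\<in>I. card (A i) \<le> k})
     \<le> real (card {i\<in>I. card (A i) \<le> k \<and> t \<le> card (fragment I A k W i)}) * real (card (X - W) choose m)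
       + real (card (member_free_nsubsets (X - W) m I (residual I A k W)))
         * real (card {i\<in>I. card (residual I A k W i) < t})"
proof -
  let ?F = "{Y\<in>nsubsets (X - W) m. \<forall>i\<in>I. \<not> A i \<subseteq> W \<union> Y}"
  let ?large = "{i\<in>I. card (A i) \<le> k \<and> t \<le> card (fragment I A k W i)}"
  let ?rest = "{i\<in>I. card (A i) \<le> k \<and> \<not> t \<le> card (fragment I A k W i)}"
  have split: "card {i\<in>I. card (A i) \<le> k} = card ?large + card ?rest"
    using I by (subst card_Un_disjoint[symmetric]) (auto intro: arg_cong[where f = card])
  have "card ?F \<le> card (nsubsets (X - W) m)"
    using X by (intro card_mono) auto
  then have F_le: "card ?F \<le> card (X - W) choose m"
    using X by (simp add: n_subsets)
  have "?F \<subseteq> member_free_nsubsets (X - W) m I (residual I A k W)"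
    using residual_covers_member[of _ I A W k] by blast
  then have F_free: "card ?F \<le> card (member_free_nsubsets (X - W) m I (residual I A k W))"
    using X by (intro card_mono) auto
  have "card ?rest \<le> card {i\<in>I. card (residual I A k W i) < t}"
    using I by (intro card_mono) (auto simp: residual_def)
  with split F_le F_free show ?thesis
    by (simp add: distrib_left mult_mono add_mono flip: of_nat_mult of_nat_add)
qed

lemma card_member_free_nsubsets_round_le:
  fixes A :: "'i \<Rightarrow> 'a set" and B :: real
  assumes X: "finite X" and I: "finite I"
    and residual_le: "\<And>W. W \<in> nsubsets X w \<Longrightarrow>
      real (card (member_free_nsubsets (X - W) m I (residual I A k W)))
        * real (card {i\<in>I. card (residual I A k W i) < t}) \<le> B"
  shows "real ((w + m) choose w) * (real (card (member_free_nsubsets X (w + m) I A)) * real (card {i\<in>I. card (A i) \<le> k}))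
     \<le> (\<Sum>W\<in>nsubsets X w. real (card {i\<in>I. card (A i) \<le> k \<and> t \<le> card (fragment I A k W i)}))
         * real ((card X - w) choose m) + real (card X choose w) * B"
proof -
  have card_diff: "card (X - W) = card X - w" if "W \<in> nsubsets X w" for W
    using that X by (metis (mono_tags) card_Diff_subset finite_subset mem_Collect_eq)
  have "real ((w + m) choose w) * (real (card (member_free_nsubsets X (w + m) I A)) * real (card {i\<in>I. card (A i) \<le> k}))
      = (\<Sum>W\<in>nsubsets X w. real (card {Y\<in>nsubsets (X - W) m. \<forall>i\<in>I. \<not> A i \<subseteq> W \<union> Y}) * real (card {i\<in>I. card (A i) \<le> k}))"
    unfolding sum_distrib_right[symmetric] of_nat_sum[symmetric]
      sum_card_disjoint_extensions[OF X, where P = "\<lambda>Y. \<forall>i\<in>I. \<not> A i \<subseteq> Y"] by simp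
  also have "\<dots> \<le> (\<Sum>W\<in>nsubsets X w. real (card {i\<in>I. card (A i) \<le> k \<and> t \<le> card (fragment I A k W i)})
      * real ((card X - w) choose m) + B)"
  proof (rule sum_mono)
    fix W assume W: "W \<in> nsubsets X w"
    let ?large = "real (card {i\<in>I. card (A i) \<le> k \<and> t \<le> card (fragment I A k W i)})"
    have "real (card {Y\<in>nsubsets (X - W) m. \<forall>i\<in>I. \<not> A i \<subseteq> W \<union> Y}) * real (card {i\<in>I. card (A i) \<le> k})
        \<le> ?large * real (card (X - W) choose m)
          + real (card (member_free_nsubsets (X - W) m I (residual I A k W)))
            * real (card {i\<in>I. card (residual I A k W i) < t})"
      by (rule card_member_free_extensions_le[OF X I])
    also have "\<dots> \<le> ?large * real ((card X - w) choose m) + B"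
      using residual_le[OF W] card_diff[OF W] by simp
    finally show "real (card {Y\<in>nsubsets (X - W) m. \<forall>i\<in>I. \<not> A i \<subseteq> W \<union> Y}) * real (card {i\<in>I. card (A i) \<le> k})
        \<le> ?large * real ((card X - w) choose m) + B" .
  qed
  also have "\<dots> = (\<Sum>W\<in>nsubsets X w. real (card {i\<in>I. card (A i) \<le> k \<and> t \<le> card (fragment I A k W i)}))
      * real ((card X - w) choose m) + real (card X choose w) * B"
    using X by (simp add: sum.distrib sum_distrib_right n_subsets)
  finally show ?thesis .
qed

text \<open>Pairs \<open>(Y, i)\<close> are counted rather than sets \<open>Y\<close>: the residual family keeps every index,
  including members whose fragment is still large, but only small members may be charged in the
  next round.\<close>

lemma card_member_free_nsubsets_le:
  fixes A :: "'i \<Rightarrow> 'a set" and \<kappa> q :: real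
  assumes I: "finite I" and \<kappa>: "\<kappa> > 0" and w: "w \<ge> 1"
    and q: "q = 4 * real N / (real w * \<kappa>)" and q_le: "q \<le> 1 / 2"
    and "finite X" "\<forall>i\<in>I. A i \<subseteq> X" "spread \<kappa> I A" "card X \<le> N"
  shows "real (card (member_free_nsubsets X (L * w) I A)) * real (card {i\<in>I. card (A i) < 2 ^ L})
           \<le> 4 * q * (1 - 1 / 2 ^ L) * real (card X choose (L * w)) * real (card I)"
  using assms(6-9)
proof (induction L arbitrary: X A)
  case 0
  have "finite (A i)" if "i \<in> I" for i
    using 0(2) that by (intro rev_finite_subset[OF 0(1)]) auto
  then have "member_free_nsubsets X (0 * w) I A = {} \<or> {i\<in>I. card (A i) < 2 ^ 0} = {}"
    by fastforce
  then show ?case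
    by (elim disjE; simp only: card.empty of_nat_0 mult_zero_left mult_zero_right; simp)
next
  case (Suc L)
  note X = Suc.prems(1) and AX = Suc.prems(2) and sp = Suc.prems(3) and XN = Suc.prems(4)
  define m where "m = L * w"
  define t :: nat where "t = 2 ^ L"
  define k :: nat where "k = 2 * t - 1"
  let ?M = "card X"
  let ?B = "4 * q * (1 - 1 / 2 ^ L) * real ((?M - w) choose m) * real (card I)"
  have "2 ^ Suc L = Suc k"
    by (simp add: k_def t_def)
  then have small: "{i\<in>I. card (A i) < 2 ^ Suc L} = {i\<in>I. card (A i) \<le> k}"
    by (simp add: less_Suc_eq_le)
  have "real (card (member_free_nsubsets (X - W) m I (residual I A k W)))
      * real (card {i\<in>I. card (residual I A k W i) < t}) \<le> ?B"
    if W: "W \<in> nsubsets X w" for W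
  proof -
    have "\<forall>i\<in>I. residual I A k W i \<subseteq> X - W"
      using AX residual_subset[of _ I A k W] by blast
    moreover have "spread \<kappa> I (residual I A k W)"
      using \<kappa> by (intro spread_residual[OF sp I]) simp
    moreover have "card (X - W) \<le> N"
      using XN card_mono[OF X Diff_subset, of W] by linarith
    moreover have "card (X - W) = ?M - w"
      using W X by (metis (mono_tags) card_Diff_subset finite_subset mem_Collect_eq)
    ultimately show ?thesis
      using Suc.IH[of "X - W" "residual I A k W"] X by (simp only: m_def t_def finite_Diff)
  qed
  then have "real ((w + m) choose w) * (real (card (member_free_nsubsets X (w + m) I A)) * real (card {i\<in>I. card (A i) \<le> k}))
      \<le> (\<Sum>W\<in>nsubsets X w. real (card {i\<in>I. card (A i) \<le> k \<and> t \<le> card (fragment I A k W i)}))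
          * real ((?M - w) choose m) + real (?M choose w) * ?B"
    by (rule card_member_free_nsubsets_round_le[OF X I])
  also have "\<dots> \<le> 4 * q / 2 ^ Suc L * real (?M choose w) * real (card I) * real ((?M - w) choose m)
      + real (?M choose w) * ?B"
    using card_large_fragments_le_dyadic[OF X I AX sp \<kappa> XN w q q_le, of k L]
    by (intro add_right_mono mult_right_mono) (auto simp: k_def t_def)
  also have "\<dots> = (4 * q / 2 ^ Suc L + 4 * q * (1 - 1 / 2 ^ L)) * (real (?M choose w) * real ((?M - w) choose m)) * real (card I)"
    by (simp add: algebra_simps)
  also have "\<dots> = real ((w + m) choose w) * (4 * q * (1 - 1 / 2 ^ Suc L) * real (?M choose (w + m)) * real (card I))"
    unfolding of_nat_mult[symmetric] choose_mult_add[symmetric] by (simp add: field_simps)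
  finally have "real (card (member_free_nsubsets X (w + m) I A)) * real (card {i\<in>I. card (A i) \<le> k})
      \<le> 4 * q * (1 - 1 / 2 ^ Suc L) * real (?M choose (w + m)) * real (card I)"
    by (simp add: mult_le_cancel_left_pos)
  with small show ?case
    by (simp add: m_def)
qed

lemma card_member_free_nsubsets_le_of_small_members:
  fixes \<G> :: "'a set set" and \<kappa> q :: real
  assumes X: "finite X" and \<G>: "\<forall>G\<in>\<G>. G \<subseteq> X \<and> card G < 2 ^ L" "\<G> \<noteq> {}" and sp: "spread \<kappa> \<G> id"
    and \<kappa>: "\<kappa> > 0" and w: "w \<ge> 1" and q: "q = 4 * real (card X) / (real w * \<kappa>)" and q_le: "q \<le> 1 / 2"
  shows "real (card (member_free_nsubsets X (L * w) \<G> id)) \<le> 4 * q * real (card X choose (L * w))"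
proof -
  have fin: "finite \<G>"
    using X \<G>(1) by (meson Pow_iff finite_Pow_iff rev_finite_subset subsetI)
  have all_small: "{G\<in>\<G>. card (id G) < 2 ^ L} = \<G>"
    using \<G>(1) by auto
  have "real (card (member_free_nsubsets X (L * w) \<G> id)) * real (card {G\<in>\<G>. card (id G) < 2 ^ L})
      \<le> 4 * q * (1 - 1 / 2 ^ L) * real (card X choose (L * w)) * real (card \<G>)"
    using \<G>(1) by (intro card_member_free_nsubsets_le[OF fin \<kappa> w q q_le X _ sp order_refl]) auto
  also have "\<dots> \<le> 4 * q * real (card X choose (L * w)) * real (card \<G>)"
    using q \<kappa> by (intro mult_right_mono mult_left_le) auto
  finally have "real (card (member_free_nsubsets X (L * w) \<G> id)) * real (card \<G>)
      \<le> 4 * q * real (card X choose (L * w)) * real (card \<G>)"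
    unfolding all_small .
  moreover have "0 < real (card \<G>)"
    using \<G>(2) fin by (simp add: card_gt_0_iff)
  ultimately show ?thesis
    by (rule mult_right_le_imp_le)
qed

lemma exists_disjoint_members:
  fixes \<G>1 \<G>2 :: "'a set set" and \<kappa> :: real
  assumes X: "finite X"
    and \<G>1: "\<forall>G\<in>\<G>1. G \<subseteq> X \<and> card G < 2 ^ L" "\<G>1 \<noteq> {}" "spread \<kappa> \<G>1 id"
    and \<G>2: "\<forall>G\<in>\<G>2. G \<subseteq> X \<and> card G < 2 ^ L" "\<G>2 \<noteq> {}" "spread \<kappa> \<G>2 id"
    and w: "w \<ge> 1" and wide: "32 * real (card X) < real w * \<kappa>" and small: "2 * (L * w) \<le> card X"
  shows "\<exists>G1\<in>\<G>1. \<exists>G2\<in>\<G>2. G1 \<inter> G2 = {}"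
proof -
  define q where "q = 4 * real (card X) / (real w * \<kappa>)"
  have "0 < real w * \<kappa>"
    using wide by (smt (verit) of_nat_0_le_iff)
  then have \<kappa>: "\<kappa> > 0"
    using w by (simp add: zero_less_mult_iff)
  have q_less: "q < 1 / 8"
    using wide \<kappa> w by (simp add: q_def field_simps)
  have "real (card (member_free_nsubsets X (L * w) \<G>1 id)) + real (card (member_free_nsubsets X (L * w) \<G>2 id))
      \<le> 8 * q * real (card X choose (L * w))"
    using card_member_free_nsubsets_le_of_small_members[OF X \<G>1 \<kappa> w q_def]
      card_member_free_nsubsets_le_of_small_members[OF X \<G>2 \<kappa> w q_def] q_less
    by simp
  also have "\<dots> < real (card X choose (L * w))"
  proof -
    have "0 < card X choose (L * w)"
      using small by (intro zero_less_binomial) linarith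
    then show ?thesis
      using q_less by simp
  qed
  finally have "card (member_free_nsubsets X (L * w) \<G>1 id) + card (member_free_nsubsets X (L * w) \<G>2 id)
      < card X choose (L * w)"
    by linarith
  then have "\<exists>Y Y'. Y \<in> nsubsets X (L * w) - member_free_nsubsets X (L * w) \<G>1 id
      \<and> Y' \<in> nsubsets (X - Y) (L * w) - member_free_nsubsets X (L * w) \<G>2 id"
    by (intro exists_disjoint_nsubsets_avoiding[OF X small]) auto
  then obtain Y Y' where Y: "Y \<in> nsubsets X (L * w) - member_free_nsubsets X (L * w) \<G>1 id"
      and Y': "Y' \<in> nsubsets (X - Y) (L * w) - member_free_nsubsets X (L * w) \<G>2 id"
    by blast
  from Y obtain G1 where "G1 \<in> \<G>1" "G1 \<subseteq> Y"
    by auto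
  moreover from Y' obtain G2 where "G2 \<in> \<G>2" "G2 \<subseteq> Y'"
    by auto
  moreover have "Y \<inter> Y' = {}"
    using Y' by auto
  ultimately show ?thesis
    by blast
qed

lemma exists_dyadic_level:
  assumes "1 \<le> k"
  shows "\<exists>L. k < 2 ^ L \<and> 2 ^ L \<le> 2 * k \<and> L \<le> k"
proof (intro exI conjI)
  have "2 ^ floor_log k \<le> k"
    using floor_log_exp2_le assms by simp
  then show "2 ^ Suc (floor_log k) \<le> 2 * k"
    by simp
  show "Suc (floor_log k) \<le> k"
    using less_exp[of "floor_log k"] \<open>2 ^ floor_log k \<le> k\<close> by linarith
  show "k < 2 ^ Suc (floor_log k)"
    using floor_log_exp2_gt[of k] by simp
qed

lemma exists_rounds_and_width:
  fixes r :: real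
  assumes k: "1 \<le> k" "3 * k \<le> N" "k \<le> n" and r: "2 ^ 12 * log 2 (2 * real n) \<le> r"
  shows "\<exists>L w. k < 2 ^ L \<and> 1 \<le> w \<and> 32 * real N < real w * r \<and> 2 * (L * w) \<le> N"
proof -
  obtain L where L: "k < 2 ^ L" "2 ^ L \<le> 2 * k" "L \<le> k"
    using exists_dyadic_level[OF k(1)] by blast
  define w where "w = nat \<lfloor>32 * real N / r\<rfloor> + 1"
  have "2 ^ L \<le> 2 * n"
    using L(2) k(3) by linarith
  then have "(2::real) ^ L \<le> 2 * real n"
    by (metis of_nat_le_iff of_nat_mult of_nat_numeral of_nat_power)
  then have "real L \<le> log 2 (2 * real n)"
    using k by (simp add: le_log_iff powr_realpow)
  then have rL: "4096 * real L \<le> r"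
    using r by simp
  moreover have "1 \<le> real L"
    using L(1) k(1) by (cases L) auto
  ultimately have r0: "r > 0"
    by linarith
  have "real w = of_int \<lfloor>32 * real N / r\<rfloor> + 1"
    unfolding w_def using r0 by simp
  then have w: "32 * real N / r < real w" "real w \<le> 32 * real N / r + 1"
    using of_int_floor_le[of "32 * real N / r"] real_of_int_floor_add_one_gt[of "32 * real N / r"]
    by linarith+
  have "real (2 * (L * w)) \<le> 2 * real L * (32 * real N / r + 1)"
    using w by (simp add: mult_left_mono)
  also have "\<dots> = 64 * real L * real N / r + 2 * real L"
    using r0 by (simp add: field_simps)
  also have "64 * real L * real N / r \<le> real N / 64"
    using rL r0 mult_right_mono[OF rL, of "real N"] by (simp add: field_simps)
  finally have "2 * (L * w) \<le> N"
    using L(3) k(2) by linarith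
  moreover have "32 * real N < real w * r"
    using w r0 by (simp add: field_simps)
  moreover have "1 \<le> w"
    by (simp add: w_def)
  ultimately show ?thesis
    using L(1) by blast
qed

lemma exists_disjoint_members_of_spread:
  fixes \<G>1 \<G>2 :: "'a set set" and r :: real
  assumes X: "finite X"
    and \<G>1: "\<forall>G\<in>\<G>1. G \<subseteq> X \<and> G \<noteq> {} \<and> card G \<le> n" "\<G>1 \<noteq> {}" "spread r \<G>1 id"
    and \<G>2: "\<forall>G\<in>\<G>2. G \<subseteq> X \<and> G \<noteq> {} \<and> card G \<le> n" "\<G>2 \<noteq> {}" "spread r \<G>2 id"
    and r: "2 ^ 12 * log 2 (2 * real n) \<le> r"
  shows "\<exists>G1\<in>\<G>1. \<exists>G2\<in>\<G>2. G1 \<inter> G2 = {}"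
proof -
  let ?\<G> = "\<G>1 \<union> \<G>2"
  obtain G where "G \<in> \<G>1"
    using \<G>1(2) by blast
  then have "\<exists>G0. G0 \<in> ?\<G> \<and> (\<forall>G. G \<in> ?\<G> \<longrightarrow> card G \<le> card G0)"
    using \<G>1(1) \<G>2(1) by (intro ex_has_greatest_nat[where b = "Suc n"]) (auto simp: le_imp_less_Suc)
  then obtain G0 where G0: "G0 \<in> ?\<G>" and max: "\<forall>G\<in>?\<G>. card G \<le> card G0"
    by blast
  have "G0 \<subseteq> X" "G0 \<noteq> {}" "card G0 \<le> n"
    using G0 \<G>1(1) \<G>2(1) by auto
  then have "1 \<le> card G0"
    using X by (simp add: Suc_le_eq card_gt_0_iff finite_subset)
  then have "1 \<le> log 2 (2 * real n)"
    using \<open>card G0 \<le> n\<close> by (simp add: le_log_iff)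
  then have "8 \<le> r"
    using r by simp
  have "3 * card G0 \<le> card X"
  proof (cases "G0 \<in> \<G>1")
    case True
    then show ?thesis
      using \<G>1(1) by (intro three_card_member_le_of_spread[OF X _ \<G>1(3) \<open>8 \<le> r\<close>]) auto
  next
    case False
    with G0 have "G0 \<in> \<G>2"
      by blast
    then show ?thesis
      using \<G>2(1) by (intro three_card_member_le_of_spread[OF X _ \<G>2(3) \<open>8 \<le> r\<close>]) auto
  qed
  then obtain L w where L: "card G0 < 2 ^ L"
    and w: "1 \<le> w" "32 * real (card X) < real w * r" "2 * (L * w) \<le> card X"
    using exists_rounds_and_width \<open>1 \<le> card G0\<close> \<open>card G0 \<le> n\<close> r by blast
  have "\<forall>G\<in>\<G>1. G \<subseteq> X \<and> card G < 2 ^ L" "\<forall>G\<in>\<G>2. G \<subseteq> X \<and> card G < 2 ^ L"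
    using max \<G>1(1) \<G>2(1) L by (auto intro: le_less_trans)
  then show ?thesis
    using exists_disjoint_members[OF X _ \<G>1(2,3) _ \<G>2(2,3) w] by blast
qed

theorem corollary2p7:
  fixes n N :: nat and r :: real and \<G>1 \<G>2 :: "nat set set"
  assumes "0 < n" and "n \<le> N" and "0 < r"
    and "\<G>1 \<noteq> {}" and "\<G>2 \<noteq> {}"
    and "\<forall>G\<in>\<G>1. G \<subseteq> {1..N} \<and> card G \<le> n"
    and "\<forall>G\<in>\<G>2. G \<subseteq> {1..N} \<and> card G \<le> n"
    and "r_spread N r \<G>1" and "r_spread N r \<G>2"
    and "r \<ge> 2 ^ 12 * log 2 (2 * real n)"
  shows "\<exists>G1\<in>\<G>1. \<exists>G2\<in>\<G>2. G1 \<inter> G2 = {}"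
proof (cases "{} \<in> \<G>1 \<union> \<G>2")
  case True
  then show ?thesis
    using assms(4,5) by blast
next
  case False
  have "spread r \<G>1 id" "spread r \<G>2 id"
    using spread_if_r_spread[OF assms(8) _ assms(3)] spread_if_r_spread[OF assms(9) _ assms(3)] assms(6,7)
    by auto
  moreover have "\<forall>G\<in>\<G>1. G \<subseteq> {1..N} \<and> G \<noteq> {} \<and> card G \<le> n" "\<forall>G\<in>\<G>2. G \<subseteq> {1..N} \<and> G \<noteq> {} \<and> card G \<le> n"
    using False assms(6,7) by auto
  ultimately show ?thesis
    using exists_disjoint_members_of_spread[of "{1..N}" \<G>1 n r \<G>2] assms(4,5,10) by simp
qed

end
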